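(* Let $(V,c)$ be a network and $\Omega\subset V$ a finite subset of size $n$. Let $(\lambda_i,u_i)_{i=1}^n$ be a Dirichlet system for $\Omega$. Let $\mathcal H$ be a real Hilbert space and $\alpha:V\to\mathcal H$. Then for any $k<n$, $$\sum_{i=1}^k(\lambda_{k+1}-\lambda_i)^2\Big(\langle\Gamma(\alpha),u_i^2\rangle-\Lambda(\alpha,u_i)\Big)\le\sum_{i=1}^k(\lambda_{k+1}-\lambda_i)\,\big\|u_i\cdot\Delta\alpha-2\Gamma(\alpha,u_i)\big\|^2.$$
   Context: A network is a pair $(V,c)$ with $V$ countable and $c:V\times V\to[0,\infty)$ symmetric with $\pi(x):=\sum_y c(x,y)<\infty$. Set $P(x,y)=c(x,y)/\pi(x)$ and, for functions $f$ (real- or $\mathcal H$-valued), $\Delta f(x)=\sum_yP(x,y)(f(x)-f(y))$. For real $u$, $\langle f,g\rangle=\sum_x\pi(x)f(x)g(x)$. For $\alpha:V\to\mathcal H$ and real $u:V\to\mathbb R$ define: $2\Gamma(\alpha,u)(x)=\sum_yP(x,y)(u(x)-u(y))(\alpha(x)-\alpha(y))\in\mathcal H$; $2\Gamma(\alpha)(x)=\sum_yP(x,y)\|\alpha(x)-\alpha(y)\|_{\mathcal H}^2$; $\langle\Gamma(\alpha),u^2\rangle=\sum_x\pi(x)\Gamma(\alpha)(x)u(x)^2$; for $\beta:V\to\mathcal H$, $\|\beta\|^2=\sum_x\pi(x)\|\beta(x)\|_{\mathcal H}^2$; and $\Lambda(\alpha,u)=\frac14\sum_{x,y}c(x,y)|u(x)-u(y)|^2\|\alpha(x)-\alpha(y)\|_{\mathcal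 H}^2$. For finite $\Omega\subset V$ with $|\Omega|=n$, let $\Delta_\Omega f=\mathbf 1_\Omega\cdot\Delta f$ be the Dirichlet Laplacian on the space of functions vanishing outside $\Omega$. A Dirichlet system for $\Omega$ is $(\lambda_i,u_i)_{i=1}^n$ with $\lambda_1\le\cdots\le\lambda_n$ the eigenvalues of $\Delta_\Omega$, $u_i$ real-valued, vanishing outside $\Omega$, $\Delta_\Omega u_i=\lambda_iu_i$, and $\langle u_i,u_j\rangle=\mathbf 1_{i=j}$. *)

theory Defs
  imports "HOL-Analysis.Analysis"
begin

definition network :: "('v::countable \<Rightarrow> 'v \<Rightarrow> real) \<Rightarrow> bool" where
  "network c \<longleftrightarrow> (\<forall>x y. 0 \<le> c x y) \<and> (\<forall>x y. c x y = c y x) \<and>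
     (\<forall>x. (\<lambda>y. c x y) summable_on UNIV)"

definition npi :: "('v \<Rightarrow> 'v \<Rightarrow> real) \<Rightarrow> 'v \<Rightarrow> real" where
  "npi c x = (\<Sum>\<^sub>\<infinity>y. c x y)"

definition trans_prob :: "('v \<Rightarrow> 'v \<Rightarrow> real) \<Rightarrow> 'v \<Rightarrow> 'v \<Rightarrow> real" where
  "trans_prob c x y = c x y / npi c x"

definition lap :: "('v \<Rightarrow> 'v \<Rightarrow> real) \<Rightarrow> ('v \<Rightarrow> 'h::real_normed_vector) \<Rightarrow> 'v \<Rightarrow> 'h" where
  "lap c f x = (\<Sum>\<^sub>\<infinity>y. trans_prob c x y *\<^sub>R (f x - f y))"

definition nip :: "('v \<Rightarrow> 'v \<Rightarrow> real) \<Rightarrow> ('v \<Rightarrow> real) \<Rightarrow> ('v \<Rightarrow> real) \<Rightarrow> real" where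
  "nip c f g = (\<Sum>\<^sub>\<infinity>x. npi c x * f x * g x)"

definition Gamma2 :: "('v \<Rightarrow> 'v \<Rightarrow> real) \<Rightarrow> ('v \<Rightarrow> 'h::real_normed_vector) \<Rightarrow> ('v \<Rightarrow> real) \<Rightarrow> 'v \<Rightarrow> 'h" where
  "Gamma2 c \<alpha> u x = (1/2) *\<^sub>R (\<Sum>\<^sub>\<infinity>y. trans_prob c x y *\<^sub>R ((u x - u y) *\<^sub>R (\<alpha> x - \<alpha> y)))"

definition Gamma1 :: "('v \<Rightarrow> 'v \<Rightarrow> real) \<Rightarrow> ('v \<Rightarrow> 'h::real_normed_vector) \<Rightarrow> 'v \<Rightarrow> real" where
  "Gamma1 c \<alpha> x = (1/2) * (\<Sum>\<^sub>\<infinity>y. trans_prob c x y * (norm (\<alpha> x - \<alpha> y))\<^sup>2)"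

definition Gamma_u2 :: "('v \<Rightarrow> 'v \<Rightarrow> real) \<Rightarrow> ('v \<Rightarrow> 'h::real_normed_vector) \<Rightarrow> ('v \<Rightarrow> real) \<Rightarrow> real" where
  "Gamma_u2 c \<alpha> u = (\<Sum>\<^sub>\<infinity>x. npi c x * Gamma1 c \<alpha> x * (u x)\<^sup>2)"

definition nnormsq :: "('v \<Rightarrow> 'v \<Rightarrow> real) \<Rightarrow> ('v \<Rightarrow> 'h::real_normed_vector) \<Rightarrow> real" where
  "nnormsq c \<beta> = (\<Sum>\<^sub>\<infinity>x. npi c x * (norm (\<beta> x))\<^sup>2)"

definition Lambda :: "('v \<Rightarrow> 'v \<Rightarrow> real) \<Rightarrow> ('v \<Rightarrow> 'h::real_normed_vector) \<Rightarrow> ('v \<Rightarrow> real) \<Rightarrow> real" where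
  "Lambda c \<alpha> u = (1/4) * (\<Sum>\<^sub>\<infinity>(x,y). c x y * \<bar>u x - u y\<bar>\<^sup>2 * (norm (\<alpha> x - \<alpha> y))\<^sup>2)"

definition dirichlet_system ::
  "('v \<Rightarrow> 'v \<Rightarrow> real) \<Rightarrow> 'v set \<Rightarrow> nat \<Rightarrow> (nat \<Rightarrow> real) \<Rightarrow> (nat \<Rightarrow> 'v \<Rightarrow> real) \<Rightarrow> bool" where
  "dirichlet_system c \<Omega> n lam u \<longleftrightarrow>
     finite \<Omega> \<and> card \<Omega> = n \<and>
     (\<forall>i j. 1 \<le> i \<longrightarrow> i \<le> j \<longrightarrow> j \<le> n \<longrightarrow> lam i \<le> lam j) \<and>
     (\<forall>i\<in>{1..n}. \<forall>x. x \<notin> \<Omega> \<longrightarrow> u i x = 0) \<and>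
     (\<forall>i\<in>{1..n}. \<forall>x. (if x \<in> \<Omega> then lap c (u i) x else 0) = lam i * u i x) \<and>
     (\<forall>i\<in>{1..n}. \<forall>j\<in>{1..n}. nip c (u i) (u j) = (if i = j then 1 else 0))"

end

theory Submission
  imports Defs "Jordan_Normal_Form.Determinant"
begin

text \<open>Write \<open>a\<^sub>i\<^sub>j = \<langle>u\<^sub>i \<alpha>, u\<^sub>j\<rangle> \<in> H\<close> for the Fourier coefficients of \<open>u\<^sub>i \<alpha>\<close> and
  \<open>B\<^sub>i = \<Delta>(u\<^sub>i \<alpha>) - \<alpha> \<Delta>u\<^sub>i\<close>. Pointwise \<open>u\<^sub>i \<Delta>\<alpha> - 2\<Gamma>(\<alpha>,u\<^sub>i) = B\<^sub>i\<close>; the \<open>u\<^sub>j\<close>-coefficient of \<open>B\<^sub>i\<close>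
  is \<open>(\<lambda>\<^sub>j - \<lambda>\<^sub>i) a\<^sub>i\<^sub>j\<close>, and \<open>\<langle>B\<^sub>i, u\<^sub>i \<alpha>\<rangle> = \<langle>\<Gamma>(\<alpha>),u\<^sub>i\<^sup>2\<rangle> - \<Lambda>(\<alpha>,u\<^sub>i)\<close>. As the \<open>u\<^sub>j\<close> form an
  orthonormal basis of the functions on \<open>\<Omega>\<close>, Parseval gives
  \<open>\<langle>\<Gamma>(\<alpha>),u\<^sub>i\<^sup>2\<rangle> - \<Lambda>(\<alpha>,u\<^sub>i) = \<Sum>\<^sub>j (\<lambda>\<^sub>j - \<lambda>\<^sub>i) |a\<^sub>i\<^sub>j|\<^sup>2\<close> and
  \<open>\<parallel>u\<^sub>i \<Delta>\<alpha> - 2\<Gamma>(\<alpha>,u\<^sub>i)\<parallel>\<^sup>2 \<ge> \<Sum>\<^sub>j (\<lambda>\<^sub>j - \<lambda>\<^sub>i)\<^sup>2 |a\<^sub>i\<^sub>j|\<^sup>2\<close>.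
  The inequality then follows from \<open>a\<^sub>i\<^sub>j = a\<^sub>j\<^sub>i\<close> by the usual Yang-type algebra: after
  weighting with \<open>\<lambda>\<^bsub>k+1\<^esub> - \<lambda>\<^sub>i\<close>, the terms with \<open>i, j \<le> k\<close> cancel in pairs and those with
  \<open>j > k\<close> are nonnegative.\<close>

lemma abs_summable_on_small_tails:
  fixes f :: "'a \<Rightarrow> 'b::real_normed_vector"
  assumes "f abs_summable_on A" and "e > 0"
  obtains F0 where "finite F0" "F0 \<subseteq> A"
    and "\<And>F. finite F \<Longrightarrow> F \<subseteq> A \<Longrightarrow> (\<Sum>x\<in>F - F0. norm (f x)) \<le> e"
proof -
  obtain F0 where F0: "finite F0" "F0 \<subseteq> A"
    and close: "dist (\<Sum>x\<in>F0. norm (f x)) (\<Sum>\<^sub>\<infinity>x\<in>A. norm (f x)) \<le> e"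
    using infsum_finite_approximation[OF assms] by blast
  have "(\<Sum>x\<in>F - F0. norm (f x)) \<le> e" if "finite F" "F \<subseteq> A" for F
  proof -
    have "(\<Sum>x\<in>F0. norm (f x)) + (\<Sum>x\<in>F - F0. norm (f x)) = (\<Sum>x\<in>F0 \<union> F. norm (f x))"
      using F0 that by (subst sum.union_disjoint[symmetric]) (auto intro: sum.cong)
    also have "\<dots> \<le> (\<Sum>\<^sub>\<infinity>x\<in>A. norm (f x))"
      using F0 that by (intro finite_sum_le_infsum assms) auto
    finally show ?thesis
      using close by (simp add: dist_real_def)
  qed
  with F0 show ?thesis
    by (rule that)
qed

text \<open>The library's \<open>abs_summable_summable\<close> is stated for the class \<open>banach\<close>, which the sort
  \<open>{real_normed_vector, complete_space}\<close> is not a subclass of.\<close>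
lemma abs_summable_on_imp_summable_on:
  fixes f :: "'a \<Rightarrow> 'b::{real_normed_vector, complete_space}"
  assumes "f abs_summable_on A"
  shows "f summable_on A"
proof -
  have "cauchy_filter (filtermap (sum f) (finite_subsets_at_top A))"
    unfolding cauchy_filter_metric_filtermap
  proof (intro allI impI)
    fix e :: real assume "e > 0"
    then obtain F0 where F0: "finite F0" "F0 \<subseteq> A"
      and tail: "\<And>F. finite F \<Longrightarrow> F \<subseteq> A \<Longrightarrow> (\<Sum>x\<in>F - F0. norm (f x)) \<le> e / 3"
      using abs_summable_on_small_tails[OF assms, of "e / 3"] by auto
    have near: "norm (sum f F - sum f F0) \<le> e / 3" if "finite F" "F0 \<subseteq> F" "F \<subseteq> A" for F
    proof -
      have "sum f F - sum f F0 = sum f (F - F0)"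
        using that by (simp add: sum_diff)
      also have "norm \<dots> \<le> (\<Sum>x\<in>F - F0. norm (f x))"
        by (rule norm_sum)
      also have "\<dots> \<le> e / 3"
        using tail that by blast
      finally show ?thesis .
    qed
    show "\<exists>P. eventually P (finite_subsets_at_top A) \<and>
        (\<forall>F G. P F \<and> P G \<longrightarrow> dist (sum f F) (sum f G) < e)"
    proof (intro exI conjI allI impI)
      show "eventually (\<lambda>F. finite F \<and> F0 \<subseteq> F \<and> F \<subseteq> A) (finite_subsets_at_top A)"
        unfolding eventually_finite_subsets_at_top using F0 by blast
      fix F G assume "(finite F \<and> F0 \<subseteq> F \<and> F \<subseteq> A) \<and> (finite G \<and> F0 \<subseteq> G \<and> G \<subseteq> A)"
      then have "dist (sum f F) (sum f F0) \<le> e / 3" "dist (sum f G) (sum f F0) \<le> e / 3"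
        using near by (simp_all add: dist_norm)
      then have "dist (sum f F) (sum f G) \<le> e / 3 + e / 3"
        using dist_triangle2[of "sum f F" "sum f G" "sum f F0"] by linarith
      then show "dist (sum f F) (sum f G) < e" using \<open>e > 0\<close> by linarith
    qed
  qed
  then obtain L where "filtermap (sum f) (finite_subsets_at_top A) \<le> nhds L"
    using cauchy_filter_convergent convergent_filter.simps by metis
  then show ?thesis
    unfolding summable_on_def has_sum_def filterlim_def by blast
qed

lemma has_sum_diff:
  fixes f g :: "'a \<Rightarrow> 'b::topological_ab_group_add"
  assumes "(f has_sum a) A" and "(g has_sum b) A"
  shows "((\<lambda>x. f x - g x) has_sum (a - b)) A"
proof -
  have "((\<lambda>x. - g x) has_sum - b) A"
    using assms(2) by (simp add: has_sum_uminus)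
  from has_sum_add[OF assms(1) this] show ?thesis
    by simp
qed

lemma has_sum_finite_support:
  fixes f :: "'a \<Rightarrow> 'b::topological_comm_monoid_add"
  assumes "finite S" and "\<And>x. x \<notin> S \<Longrightarrow> f x = 0"
  shows "(f has_sum sum f S) UNIV"
  using has_sum_finite[OF assms(1)] by (rule has_sum_cong_neutral[THEN iffD1, rotated -1]) (use assms in auto)

lemma has_sum_finite_rows:
  fixes f :: "'a \<times> 'b \<Rightarrow> 'c::topological_comm_monoid_add"
  assumes "finite A" and "\<And>x. x \<in> A \<Longrightarrow> ((\<lambda>y. f (x, y)) has_sum s x) B"
  shows "(f has_sum (\<Sum>x\<in>A. s x)) (A \<times> B)"
proof -
  have "(f has_sum s x) (Pair x ` B)" if "x \<in> A" for x
    using assms(2)[OF that] by (subst has_sum_reindex) (auto simp: inj_on_def o_def)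
  then have "(f has_sum (\<Sum>x\<in>A. s x)) (\<Union>x\<in>A. Pair x ` B)"
    by (intro sum_has_sum assms(1)) auto
  also have "(\<Union>x\<in>A. Pair x ` B) = A \<times> B"
    by auto
  finally show ?thesis .
qed

lemma summable_on_sum:
  fixes f :: "'i \<Rightarrow> 'a \<Rightarrow> 'b::topological_comm_monoid_add"
  assumes "finite I" and "\<And>i. i \<in> I \<Longrightarrow> f i summable_on A"
  shows "(\<lambda>x. \<Sum>i\<in>I. f i x) summable_on A"
  using assms by (induction I rule: finite_induct) (auto intro: summable_on_add)

lemma weighted_sum_square_le:
  fixes w z :: "'i \<Rightarrow> real"
  assumes "\<And>i. i \<in> I \<Longrightarrow> 0 \<le> w i"
  shows "(\<Sum>i\<in>I. w i * z i)\<^sup>2 \<le> (\<Sum>i\<in>I. w i) * (\<Sum>i\<in>I. w i * (z i)\<^sup>2)"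
proof -
  have "(\<Sum>i\<in>I. w i * z i) = (\<Sum>i\<in>I. sqrt (w i) * (sqrt (w i) * z i))"
    by (rule sum.cong) (use assms in \<open>auto simp: real_sqrt_mult[symmetric]\<close>)
  also have "(\<dots>)\<^sup>2 \<le> (\<Sum>i\<in>I. (sqrt (w i))\<^sup>2) * (\<Sum>i\<in>I. (sqrt (w i) * z i)\<^sup>2)"
    by (rule Cauchy_Schwarz_ineq_sum)
  also have "\<dots> = (\<Sum>i\<in>I. w i) * (\<Sum>i\<in>I. w i * (z i)\<^sup>2)"
    using assms by (simp add: power_mult_distrib)
  finally show ?thesis .
qed

text \<open>With \<open>U = (u\<^sub>j x)\<close> and \<open>W = (p x * u\<^sub>j x)\<close>, orthonormality says \<open>W U = 1\<close>; for square
  matrices this forces \<open>U W = 1\<close>, which is the claim.\<close>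
lemma orthonormal_system_complete:
  fixes p :: "'v \<Rightarrow> real" and u :: "nat \<Rightarrow> 'v \<Rightarrow> real"
  assumes "finite \<Omega>" and "card \<Omega> = n"
    and orth: "\<And>i j. i \<in> {1..n} \<Longrightarrow> j \<in> {1..n} \<Longrightarrow>
       (\<Sum>x\<in>\<Omega>. p x * u i x * u j x) = (if i = j then 1 else 0)"
    and "x \<in> \<Omega>" and "y \<in> \<Omega>"
  shows "(\<Sum>j=1..n. u j x * u j y * p y) = (if x = y then 1 else 0)"
proof -
  obtain e where e: "bij_betw e {0..<n} \<Omega>"
    using ex_bij_betw_nat_finite[OF \<open>finite \<Omega>\<close>] \<open>card \<Omega> = n\<close> by auto
  define U where "U = mat n n (\<lambda>(a, j). u (j + 1) (e a))"
  define W where "W = mat n n (\<lambda>(j, a). p (e a) * u (j + 1) (e a))"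
  have "W * U = 1\<^sub>m n"
  proof (rule eq_matI)
    fix i j assume ij: "i < dim_row (1\<^sub>m n)" "j < dim_col (1\<^sub>m n)"
    have "(W * U) $$ (i, j) = (\<Sum>a=0..<n. p (e a) * u (i + 1) (e a) * u (j + 1) (e a))"
      using ij by (simp add: U_def W_def scalar_prod_def mult.assoc)
    also have "\<dots> = (\<Sum>z\<in>\<Omega>. p z * u (i + 1) z * u (j + 1) z)"
      using sum.reindex_bij_betw[OF e, of "\<lambda>z. p z * u (i + 1) z * u (j + 1) z"] by simp
    also have "\<dots> = 1\<^sub>m n $$ (i, j)"
      using ij orth[of "i + 1" "j + 1"] by auto
    finally show "(W * U) $$ (i, j) = 1\<^sub>m n $$ (i, j)" .
  qed (auto simp: U_def W_def)
  moreover have "U \<in> carrier_mat n n" and "W \<in> carrier_mat n n"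
    by (auto simp: U_def W_def)
  ultimately have UW: "U * W = 1\<^sub>m n"
    using mat_mult_left_right_inverse by blast
  obtain a b where ab: "a < n" "e a = x" "b < n" "e b = y"
    using e \<open>x \<in> \<Omega>\<close> \<open>y \<in> \<Omega>\<close> by (auto simp: bij_betw_def)
  have "(\<Sum>j=1..n. u j x * u j y * p y) = (\<Sum>j=0..<n. u (j + 1) x * (p y * u (j + 1) y))"
    by (rule sum.reindex_bij_witness[of _ "\<lambda>j. j + 1" "\<lambda>j. j - 1"]) auto
  also have "\<dots> = (U * W) $$ (a, b)"
    using ab by (simp add: U_def W_def scalar_prod_def)
  also have "\<dots> = (if a = b then 1 else 0)"
    using UW ab by simp
  also have "(a = b) = (x = y)"
    using ab e by (auto simp: bij_betw_def inj_on_def)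
  finally show ?thesis .
qed

lemma parseval_complete_system:
  fixes f g :: "'v \<Rightarrow> 'h::real_inner" and p :: "'v \<Rightarrow> real" and u :: "nat \<Rightarrow> 'v \<Rightarrow> real"
  assumes "finite \<Omega>"
    and complete: "\<And>x y. x \<in> \<Omega> \<Longrightarrow> y \<in> \<Omega> \<Longrightarrow>
       (\<Sum>j=1..n. u j x * u j y * p y) = (if x = y then 1 else 0)"
  shows "(\<Sum>j=1..n. inner (\<Sum>x\<in>\<Omega>. (p x * u j x) *\<^sub>R f x) (\<Sum>y\<in>\<Omega>. (p y * u j y) *\<^sub>R g y))
       = (\<Sum>x\<in>\<Omega>. p x * inner (f x) (g x))"
proof -
  have "(\<Sum>j=1..n. inner (\<Sum>x\<in>\<Omega>. (p x * u j x) *\<^sub>R f x) (\<Sum>y\<in>\<Omega>. (p y * u j y) *\<^sub>R g y))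
      = (\<Sum>j=1..n. \<Sum>x\<in>\<Omega>. \<Sum>y\<in>\<Omega>. p x * inner (f x) (g y) * (u j x * u j y * p y))"
    unfolding inner_sum_left by (simp only: inner_sum_right inner_scaleR_left inner_scaleR_right mult_ac)
  also have "\<dots> = (\<Sum>x\<in>\<Omega>. \<Sum>j=1..n. \<Sum>y\<in>\<Omega>. p x * inner (f x) (g y) * (u j x * u j y * p y))"
    by (rule sum.swap)
  also have "\<dots> = (\<Sum>x\<in>\<Omega>. \<Sum>y\<in>\<Omega>. p x * inner (f x) (g y) * (\<Sum>j=1..n. u j x * u j y * p y))"
    by (simp only: sum.swap[of _ "{1..n}"] sum_distrib_left)
  also have "\<dots> = (\<Sum>x\<in>\<Omega>. \<Sum>y\<in>\<Omega>. p x * inner (f x) (g y) * (if x = y then 1 else 0))"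
    by (intro sum.cong refl) (simp only: complete)
  also have "\<dots> = (\<Sum>x\<in>\<Omega>. p x * inner (f x) (g x))"
    using assms(1) by (simp add: if_distrib cong: if_cong)
  finally show ?thesis .
qed

lemma gap_weighted_sum_le:
  fixes lam :: "nat \<Rightarrow> real" and w :: "nat \<Rightarrow> nat \<Rightarrow> real"
  assumes "k < n" and mono: "\<And>i j. 1 \<le> i \<Longrightarrow> i \<le> j \<Longrightarrow> j \<le> n \<Longrightarrow> lam i \<le> lam j"
    and w_sym: "\<And>i j. w i j = w j i" and w_nonneg: "\<And>i j. 0 \<le> w i j"
  shows "(\<Sum>i=1..k. (lam (Suc k) - lam i)\<^sup>2 * (\<Sum>j=1..n. (lam j - lam i) * w i j))
       \<le> (\<Sum>i=1..k. (lam (Suc k) - lam i) * (\<Sum>j=1..n. (lam j - lam i)\<^sup>2 * w i j))"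
proof -
  define \<mu> where "\<mu> = lam (Suc k)"
  define F where "F i j = w i j * (lam j - lam i) * (\<mu> - lam i) * (lam j - \<mu>)" for i j
  have "(\<Sum>i=1..k. (\<mu> - lam i) * (\<Sum>j=1..n. (lam j - lam i)\<^sup>2 * w i j))
      - (\<Sum>i=1..k. (\<mu> - lam i)\<^sup>2 * (\<Sum>j=1..n. (lam j - lam i) * w i j))
      = (\<Sum>i=1..k. \<Sum>j=1..n. F i j)"
    by (simp add: F_def sum_distrib_left sum_subtractf[symmetric] power2_eq_square algebra_simps)
  also have "\<dots> = (\<Sum>i=1..k. \<Sum>j=1..k. F i j) + (\<Sum>i=1..k. \<Sum>j=Suc k..n. F i j)"
  proof -
    have "{1..n} = {1..k} \<union> {Suc k..n}"
      using \<open>k < n\<close> by auto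
    then show ?thesis
      by (simp add: sum.union_disjoint sum.distrib)
  qed
  finally have diff: "(\<Sum>i=1..k. (\<mu> - lam i) * (\<Sum>j=1..n. (lam j - lam i)\<^sup>2 * w i j))
      - (\<Sum>i=1..k. (\<mu> - lam i)\<^sup>2 * (\<Sum>j=1..n. (lam j - lam i) * w i j))
      = (\<Sum>i=1..k. \<Sum>j=1..k. F i j) + (\<Sum>i=1..k. \<Sum>j=Suc k..n. F i j)" .
  have "(\<Sum>i=1..k. \<Sum>j=1..k. F i j) = (\<Sum>i=1..k. \<Sum>j=1..k. - F j i)"
    by (intro sum.cong refl) (simp add: F_def w_sym algebra_simps)
  also have "\<dots> = - (\<Sum>i=1..k. \<Sum>j=1..k. F i j)"
    by (simp add: sum_negf sum.swap[of "\<lambda>i j. F j i"])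
  finally have antisym: "(\<Sum>i=1..k. \<Sum>j=1..k. F i j) = 0"
    by simp
  have "0 \<le> (\<Sum>i=1..k. \<Sum>j=Suc k..n. F i j)"
  proof (intro sum_nonneg)
    fix i j assume "i \<in> {1..k}" and "j \<in> {Suc k..n}"
    then have "lam i \<le> \<mu>" and "\<mu> \<le> lam j"
      using mono[of i "Suc k"] mono[of "Suc k" j] \<open>k < n\<close> by (auto simp: \<mu>_def)
    then show "0 \<le> F i j"
      unfolding F_def using w_nonneg[of i j] by simp
  qed
  then show ?thesis
    using diff antisym by (simp add: \<mu>_def)
qed

lemma network_nonneg: "network c \<Longrightarrow> 0 \<le> c x y"
  unfolding network_def by blast

lemma network_sym: "network c \<Longrightarrow> c x y = c y x"
  unfolding network_def by blast

lemma network_has_sum_npi: "network c \<Longrightarrow> (c x has_sum npi c x) UNIV"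
  unfolding network_def npi_def by (simp add: summable_iff_has_sum_infsum)

lemma sum_le_npi:
  assumes "network c" and "finite F"
  shows "(\<Sum>y\<in>F. c x y) \<le> npi c x"
  using assms by (intro finite_sum_le_has_sum[OF network_has_sum_npi]) (auto simp: network_nonneg)

lemma npi_nonneg: "network c \<Longrightarrow> 0 \<le> npi c x"
  using sum_le_npi[of c "{}"] by simp

lemma npi_mult_Gamma1:
  assumes "network c"
  shows "npi c x * Gamma1 c \<alpha> x = (\<Sum>\<^sub>\<infinity>y. c x y * (norm (\<alpha> x - \<alpha> y))\<^sup>2) / 2"
proof (cases "npi c x = 0")
  case True
  then have "c x y = 0" for y
    using sum_le_npi[OF assms, of "{y}" x] network_nonneg[OF assms, of x y] by simp
  then show ?thesis
    using True by simp
next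
  case False
  have "(\<Sum>\<^sub>\<infinity>y. c x y / npi c x * (norm (\<alpha> x - \<alpha> y))\<^sup>2)
      = (\<Sum>\<^sub>\<infinity>y. c x y * (norm (\<alpha> x - \<alpha> y))\<^sup>2) * inverse (npi c x)"
    by (subst infsum_cmult_left'[symmetric]) (simp add: divide_inverse mult_ac)
  with False show ?thesis
    unfolding Gamma1_def trans_prob_def by (simp add: field_simps)
qed

lemma Gamma_u2_minus_Lambda:
  fixes \<alpha> :: "'v::countable \<Rightarrow> 'h::real_normed_vector"
  assumes net: "network c" and "finite \<Omega>" and u_vanish: "\<And>x. x \<notin> \<Omega> \<Longrightarrow> u x = 0"
    and rows: "\<And>x. x \<in> \<Omega> \<Longrightarrow> (\<lambda>y. c x y * (norm (\<alpha> x - \<alpha> y))\<^sup>2) summable_on UNIV"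
  shows "Gamma_u2 c \<alpha> u - Lambda c \<alpha> u
       = (\<Sum>x\<in>\<Omega>. \<Sum>y\<in>\<Omega>. u x * u y * (c x y * (norm (\<alpha> x - \<alpha> y))\<^sup>2)) / 2"
proof -
  define D where "D x y = c x y * (norm (\<alpha> x - \<alpha> y))\<^sup>2" for x y
  have D_sym: "D x y = D y x" for x y
    by (simp add: D_def network_sym[OF net, of x y] norm_minus_commute)
  define row where "row x = (\<Sum>\<^sub>\<infinity>y. D x y)" for x
  define S where "S = (\<Sum>x\<in>\<Omega>. (u x)\<^sup>2 * row x)"
  define C where "C = (\<Sum>x\<in>\<Omega>. \<Sum>y\<in>\<Omega>. u x * u y * D x y)"
  \<comment> \<open>In \<open>Lambda\<close>, split \<open>(u x - u y)\<^sup>2 = (u x)\<^sup>2 + (u y)\<^sup>2 - 2 u x u y\<close>: both square terms sum to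
    \<open>S = 2 Gamma_u2\<close> (by symmetry of \<open>D\<close>), and the cross term is finitely supported.\<close>
  have "Gamma_u2 c \<alpha> u = (\<Sum>x\<in>\<Omega>. npi c x * Gamma1 c \<alpha> x * (u x)\<^sup>2)"
    unfolding Gamma_u2_def using \<open>finite \<Omega>\<close> u_vanish by (intro infsumI has_sum_finite_support) auto
  then have Gamma: "Gamma_u2 c \<alpha> u = S / 2"
    by (simp add: S_def row_def D_def npi_mult_Gamma1[OF net] sum_divide_distrib mult_ac)
  have "((\<lambda>y. D x y) has_sum row x) UNIV" if "x \<in> \<Omega>" for x
    using rows[OF that] by (simp add: row_def D_def summable_iff_has_sum_infsum)
  then have "((\<lambda>(x, y). (u x)\<^sup>2 * D x y) has_sum S) (\<Omega> \<times> UNIV)"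
    unfolding S_def by (intro has_sum_finite_rows \<open>finite \<Omega>\<close>) (auto intro: has_sum_cmult_right)
  then have left: "((\<lambda>(x, y). (u x)\<^sup>2 * D x y) has_sum S) UNIV"
    by (rule has_sum_cong_neutral[THEN iffD1, rotated -1]) (auto intro: ccontr simp: u_vanish)
  have "((\<lambda>(x, y). (u x)\<^sup>2 * D x y) has_sum S) (prod.swap ` UNIV)"
    using left by simp
  then have right: "((\<lambda>(x, y). (u y)\<^sup>2 * D x y) has_sum S) UNIV"
    by (subst (asm) has_sum_reindex) (auto simp: o_def D_sym case_prod_unfold)
  have "((\<lambda>(x, y). u x * u y * D x y) has_sum C) UNIV"
  proof -
    have "((\<lambda>(x, y). u x * u y * D x y) has_sum C) (\<Omega> \<times> \<Omega>)"
      unfolding C_def sum.cartesian_product using \<open>finite \<Omega>\<close> by (simp add: case_prod_unfold)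
    then show ?thesis
      by (rule has_sum_cong_neutral[THEN iffD1, rotated -1]) (auto intro: ccontr simp: u_vanish)
  qed
  from has_sum_diff[OF has_sum_add[OF left right] has_sum_cmult_right[OF this, of 2]]
  have "((\<lambda>(x, y). c x y * \<bar>u x - u y\<bar>\<^sup>2 * (norm (\<alpha> x - \<alpha> y))\<^sup>2) has_sum S + S - 2 * C) UNIV"
    by (simp add: case_prod_unfold D_def power2_diff algebra_simps)
  then have "Lambda c \<alpha> u = (2 * S - 2 * C) / 4"
    unfolding Lambda_def by (simp add: infsumI)
  with Gamma show ?thesis
    by (simp add: C_def D_def)
qed

locale dirichlet_basis =
  fixes c :: "'v::countable \<Rightarrow> 'v \<Rightarrow> real" and \<Omega> :: "'v set" and n :: nat
    and lam :: "nat \<Rightarrow> real" and u :: "nat \<Rightarrow> 'v \<Rightarrow> real"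
  assumes network: "network c" and system: "dirichlet_system c \<Omega> n lam u"
begin

lemma finite_\<Omega>: "finite \<Omega>"
  using system unfolding dirichlet_system_def by blast

lemma lam_mono: "1 \<le> i \<Longrightarrow> i \<le> j \<Longrightarrow> j \<le> n \<Longrightarrow> lam i \<le> lam j"
  using system unfolding dirichlet_system_def by blast

lemma u_vanish: "i \<in> {1..n} \<Longrightarrow> x \<notin> \<Omega> \<Longrightarrow> u i x = 0"
  using system unfolding dirichlet_system_def by blast

lemma lap_u: "i \<in> {1..n} \<Longrightarrow> x \<in> \<Omega> \<Longrightarrow> lap c (u i) x = lam i * u i x"
  using system unfolding dirichlet_system_def by (metis (full_types))

lemma orthonormal:
  assumes "i \<in> {1..n}" and "j \<in> {1..n}"
  shows "(\<Sum>x\<in>\<Omega>. npi c x * u i x * u j x) = (if i = j then 1 else 0)"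
proof -
  have "nip c (u i) (u j) = (\<Sum>x\<in>\<Omega>. npi c x * u i x * u j x)"
    unfolding nip_def using finite_\<Omega> u_vanish[OF assms(1)] by (intro infsumI has_sum_finite_support) auto
  then show ?thesis
    using system assms unfolding dirichlet_system_def by simp
qed

lemma completeness:
  "x \<in> \<Omega> \<Longrightarrow> y \<in> \<Omega> \<Longrightarrow> (\<Sum>j=1..n. u j x * u j y * npi c y) = (if x = y then 1 else 0)"
  using system orthonormal unfolding dirichlet_system_def by (intro orthonormal_system_complete) auto

lemma npi_pos:
  assumes "x \<in> \<Omega>"
  shows "0 < npi c x"
proof -
  have "(\<Sum>j=1..n. u j x * u j x) * npi c x = 1"
    using completeness[OF assms assms] by (simp add: sum_distrib_right)
  then show ?thesis
    using npi_nonneg[OF network, of x] by (cases "npi c x = 0") auto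
qed

lemma sum_c_mult_u:
  assumes i: "i \<in> {1..n}" and x: "x \<in> \<Omega>"
  shows "(\<Sum>y\<in>\<Omega>. c x y * u i y) = npi c x * (1 - lam i) * u i x"
proof -
  define S where "S = (\<Sum>y\<in>\<Omega>. c x y * u i y)"
  have "((\<lambda>y. c x y * (u i x / npi c x)) has_sum npi c x * (u i x / npi c x)) UNIV"
    using network_has_sum_npi[OF network] by (rule has_sum_cmult_left)
  moreover have "((\<lambda>y. c x y * u i y / npi c x) has_sum S / npi c x) UNIV"
    unfolding S_def sum_divide_distrib using finite_\<Omega> u_vanish[OF i] by (intro has_sum_finite_support) auto
  ultimately have "((\<lambda>y. c x y * (u i x / npi c x) - c x y * u i y / npi c x)
      has_sum npi c x * (u i x / npi c x) - S / npi c x) UNIV"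
    by (rule has_sum_diff)
  then have "((\<lambda>y. trans_prob c x y *\<^sub>R (u i x - u i y)) has_sum u i x - S / npi c x) UNIV"
    using npi_pos[OF x] by (subst has_sum_cong) (auto simp: trans_prob_def right_diff_distrib)
  then have "lam i * u i x = u i x - S / npi c x"
    using lap_u[OF i x] unfolding lap_def by (simp add: infsumI)
  then have "S / npi c x = (1 - lam i) * u i x"
    by (simp add: left_diff_distrib)
  then show ?thesis
    using npi_pos[OF x] unfolding S_def[symmetric] by (simp add: divide_eq_eq mult_ac)
qed

end

locale dirichlet_basis_field = dirichlet_basis c \<Omega> n lam u
  for c :: "'v::countable \<Rightarrow> 'v \<Rightarrow> real" and \<Omega> n lam u +
  fixes \<alpha> :: "'v \<Rightarrow> 'h::{real_inner, complete_space}"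
  assumes rows_summable: "x \<in> \<Omega> \<Longrightarrow> (\<lambda>y. c x y * (norm (\<alpha> x - \<alpha> y))\<^sup>2) summable_on UNIV"
begin

definition coeff :: "nat \<Rightarrow> nat \<Rightarrow> 'h" where
  "coeff i j = (\<Sum>x\<in>\<Omega>. (npi c x * u i x * u j x) *\<^sub>R \<alpha> x)"

text \<open>\<open>commutator i = \<Delta>(u\<^sub>i \<alpha>) - \<alpha> \<Delta>u\<^sub>i\<close>, written out using that \<open>u\<^sub>i\<close> vanishes outside \<open>\<Omega>\<close>.\<close>
definition commutator :: "nat \<Rightarrow> 'v \<Rightarrow> 'h" where
  "commutator i x = (\<Sum>y\<in>\<Omega>. (trans_prob c x y * u i y) *\<^sub>R (\<alpha> x - \<alpha> y))"

lemma coeff_sym: "coeff i j = coeff j i"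
  unfolding coeff_def by (simp add: mult_ac)

lemma summable_lap_terms:
  assumes "x \<in> \<Omega>"
  shows "(\<lambda>y. trans_prob c x y *\<^sub>R (\<alpha> x - \<alpha> y)) summable_on UNIV"
proof (rule abs_summable_on_imp_summable_on, rule summable_on_comparison_test)
  show "(\<lambda>y. (c x y + c x y * (norm (\<alpha> x - \<alpha> y))\<^sup>2) * inverse (npi c x)) summable_on UNIV"
    using has_sum_imp_summable[OF network_has_sum_npi[OF network]] rows_summable[OF assms]
    by (intro summable_on_cmult_left summable_on_add)
next
  fix y
  have "t \<le> 1 + t\<^sup>2" for t :: real
  proof -
    have "2 * t \<le> t\<^sup>2 + 1"
      using zero_le_power2[of "t - 1"] by (simp add: power2_diff)
    then show ?thesis
      using zero_le_power2[of t] by linarith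
  qed
  then have "c x y * norm (\<alpha> x - \<alpha> y) \<le> c x y * (1 + (norm (\<alpha> x - \<alpha> y))\<^sup>2)"
    using network_nonneg[OF network] by (intro mult_left_mono) auto
  then show "norm (trans_prob c x y *\<^sub>R (\<alpha> x - \<alpha> y))
      \<le> (c x y + c x y * (norm (\<alpha> x - \<alpha> y))\<^sup>2) * inverse (npi c x)"
    using npi_pos[OF assms] network_nonneg[OF network, of x y]
    by (simp add: trans_prob_def divide_inverse distrib_left mult_right_mono)
qed simp

lemma residual_eq_commutator:
  assumes i: "i \<in> {1..n}"
  shows "u i x *\<^sub>R lap c \<alpha> x - 2 *\<^sub>R Gamma2 c \<alpha> (u i) x = commutator i x"
proof -
  define e where "e y = trans_prob c x y *\<^sub>R (\<alpha> x - \<alpha> y)" for y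
  have "((\<lambda>y. u i x *\<^sub>R e y) has_sum u i x *\<^sub>R lap c \<alpha> x) UNIV"
  proof (cases "x \<in> \<Omega>")
    case True
    then show ?thesis
      unfolding lap_def e_def infsum_scaleR_right[symmetric]
      by (intro has_sum_infsum summable_on_scaleR_right summable_lap_terms)
  next
    case False
    then show ?thesis
      using u_vanish[OF i] by simp
  qed
  moreover have "((\<lambda>y. (trans_prob c x y * u i y) *\<^sub>R (\<alpha> x - \<alpha> y)) has_sum commutator i x) UNIV"
    unfolding commutator_def using finite_\<Omega> u_vanish[OF i] by (intro has_sum_finite_support) auto
  ultimately have "((\<lambda>y. u i x *\<^sub>R e y - (trans_prob c x y * u i y) *\<^sub>R (\<alpha> x - \<alpha> y))
      has_sum u i x *\<^sub>R lap c \<alpha> x - commutator i x) UNIV"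
    by (rule has_sum_diff)
  moreover have "u i x *\<^sub>R e y - (trans_prob c x y * u i y) *\<^sub>R (\<alpha> x - \<alpha> y)
      = trans_prob c x y *\<^sub>R ((u i x - u i y) *\<^sub>R (\<alpha> x - \<alpha> y))" for y
    by (simp add: e_def scaleR_diff_left scaleR_diff_right mult.commute)
  ultimately have "2 *\<^sub>R Gamma2 c \<alpha> (u i) x = u i x *\<^sub>R lap c \<alpha> x - commutator i x"
    unfolding Gamma2_def by (simp add: infsumI)
  then show ?thesis
    by simp
qed

lemma commutator_coeff:
  assumes i: "i \<in> {1..n}" and j: "j \<in> {1..n}"
  shows "(\<Sum>x\<in>\<Omega>. (npi c x * u j x) *\<^sub>R commutator i x) = (lam j - lam i) *\<^sub>R coeff i j"
proof -
  define a where "a x y = c x y * u j x * u i y" for x y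
  have coef: "(npi c x * u j x) * (trans_prob c x y * u i y) = a x y" if "x \<in> \<Omega>" for x y
    unfolding a_def trans_prob_def using npi_pos[OF that] by simp
  have rows: "(\<Sum>y\<in>\<Omega>. a x y) = (1 - lam i) * (npi c x * u i x * u j x)" if "x \<in> \<Omega>" for x
  proof -
    have "(\<Sum>y\<in>\<Omega>. a x y) = u j x * (\<Sum>y\<in>\<Omega>. c x y * u i y)"
      by (simp add: a_def sum_distrib_left mult_ac)
    then show ?thesis
      by (simp add: sum_c_mult_u[OF i that] mult_ac)
  qed
  have cols: "(\<Sum>x\<in>\<Omega>. a x y) = (1 - lam j) * (npi c y * u i y * u j y)" if "y \<in> \<Omega>" for y
  proof -
    have "(\<Sum>x\<in>\<Omega>. a x y) = u i y * (\<Sum>x\<in>\<Omega>. c y x * u j x)"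
      by (simp add: a_def sum_distrib_left network_sym[OF network, of y] mult_ac)
    then show ?thesis
      by (simp add: sum_c_mult_u[OF j that] mult_ac)
  qed
  have "(\<Sum>x\<in>\<Omega>. (npi c x * u j x) *\<^sub>R commutator i x)
      = (\<Sum>x\<in>\<Omega>. \<Sum>y\<in>\<Omega>. a x y *\<^sub>R \<alpha> x) - (\<Sum>x\<in>\<Omega>. \<Sum>y\<in>\<Omega>. a x y *\<^sub>R \<alpha> y)"
    unfolding commutator_def scaleR_sum_right sum_subtractf[symmetric]
    by (intro sum.cong refl) (simp only: scaleR_scaleR coef scaleR_diff_right)
  also have "(\<Sum>x\<in>\<Omega>. \<Sum>y\<in>\<Omega>. a x y *\<^sub>R \<alpha> x) = (\<Sum>x\<in>\<Omega>. (\<Sum>y\<in>\<Omega>. a x y) *\<^sub>R \<alpha> x)"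
    by (simp add: scaleR_sum_left)
  also have "\<dots> = (1 - lam i) *\<^sub>R coeff i j"
    unfolding coeff_def scaleR_sum_right by (intro sum.cong refl) (simp add: rows)
  also have "(\<Sum>x\<in>\<Omega>. \<Sum>y\<in>\<Omega>. a x y *\<^sub>R \<alpha> y) = (\<Sum>y\<in>\<Omega>. (\<Sum>x\<in>\<Omega>. a x y) *\<^sub>R \<alpha> y)"
    by (subst sum.swap) (simp add: scaleR_sum_left)
  also have "\<dots> = (1 - lam j) *\<^sub>R coeff i j"
    unfolding coeff_def scaleR_sum_right by (intro sum.cong refl) (simp add: cols)
  finally show ?thesis
    by (simp add: algebra_simps)
qed

lemma commutator_energy:
  assumes i: "i \<in> {1..n}"
  shows "(\<Sum>x\<in>\<Omega>. npi c x * (norm (commutator i x))\<^sup>2)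
       = (\<Sum>j=1..n. (lam j - lam i)\<^sup>2 * (norm (coeff i j))\<^sup>2)"
proof -
  have "(\<Sum>x\<in>\<Omega>. npi c x * (norm (commutator i x))\<^sup>2)
      = (\<Sum>x\<in>\<Omega>. npi c x * inner (commutator i x) (commutator i x))"
    by (simp add: power2_norm_eq_inner)
  also have "\<dots> = (\<Sum>j=1..n. inner (\<Sum>x\<in>\<Omega>. (npi c x * u j x) *\<^sub>R commutator i x)
                                (\<Sum>y\<in>\<Omega>. (npi c y * u j y) *\<^sub>R commutator i y))"
    by (rule parseval_complete_system[OF finite_\<Omega> completeness, symmetric])
  also have "\<dots> = (\<Sum>j=1..n. (lam j - lam i)\<^sup>2 * (norm (coeff i j))\<^sup>2)"
  proof (intro sum.cong refl)
    fix j assume "j \<in> {1..n}"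
    then show "inner (\<Sum>x\<in>\<Omega>. (npi c x * u j x) *\<^sub>R commutator i x)
                     (\<Sum>y\<in>\<Omega>. (npi c y * u j y) *\<^sub>R commutator i y)
        = (lam j - lam i)\<^sup>2 * (norm (coeff i j))\<^sup>2"
      by (simp add: commutator_coeff[OF i] power2_norm_eq_inner power2_eq_square[of "lam j - lam i"])
  qed
  finally show ?thesis .
qed

lemma npi_commutator_norm_le:
  "npi c x * (norm (commutator i x))\<^sup>2 \<le> (\<Sum>y\<in>\<Omega>. (u i y)\<^sup>2 * (c y x * (norm (\<alpha> y - \<alpha> x))\<^sup>2))"
proof (cases "npi c x = 0")
  case True
  then show ?thesis
    using network_nonneg[OF network] by (simp add: sum_nonneg)
next
  case False
  then have p: "0 < npi c x"
    using npi_nonneg[OF network, of x] by simp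
  define z where "z y = \<bar>u i y\<bar> * norm (\<alpha> x - \<alpha> y)" for y
  have "norm (commutator i x) \<le> (\<Sum>y\<in>\<Omega>. norm ((trans_prob c x y * u i y) *\<^sub>R (\<alpha> x - \<alpha> y)))"
    unfolding commutator_def by (rule norm_sum)
  also have "\<dots> = (\<Sum>y\<in>\<Omega>. c x y * z y) / npi c x"
    unfolding sum_divide_distrib using p network_nonneg[OF network]
    by (intro sum.cong refl) (simp add: z_def trans_prob_def abs_mult)
  finally have "npi c x * (norm (commutator i x))\<^sup>2 \<le> npi c x * ((\<Sum>y\<in>\<Omega>. c x y * z y) / npi c x)\<^sup>2"
    using p by (intro mult_left_mono power_mono) auto
  also have "\<dots> = (\<Sum>y\<in>\<Omega>. c x y * z y)\<^sup>2 / npi c x"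
    using p by (simp add: power2_eq_square)
  also have "\<dots> \<le> (\<Sum>y\<in>\<Omega>. c x y) * (\<Sum>y\<in>\<Omega>. c x y * (z y)\<^sup>2) / npi c x"
    using p network_nonneg[OF network] by (intro divide_right_mono weighted_sum_square_le) auto
  also have "\<dots> \<le> npi c x * (\<Sum>y\<in>\<Omega>. c x y * (z y)\<^sup>2) / npi c x"
    using p network_nonneg[OF network]
    by (intro divide_right_mono mult_right_mono sum_le_npi[OF network finite_\<Omega>] sum_nonneg) auto
  also have "\<dots> = (\<Sum>y\<in>\<Omega>. (u i y)\<^sup>2 * (c y x * (norm (\<alpha> y - \<alpha> x))\<^sup>2))"
    using p by (simp add: z_def power_mult_distrib network_sym[OF network, of x] norm_minus_commute mult_ac)
  finally show ?thesis .
qed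

lemma commutator_energy_le_nnormsq:
  assumes i: "i \<in> {1..n}"
  shows "(\<Sum>x\<in>\<Omega>. npi c x * (norm (commutator i x))\<^sup>2)
       \<le> nnormsq c (\<lambda>x. u i x *\<^sub>R lap c \<alpha> x - 2 *\<^sub>R Gamma2 c \<alpha> (u i) x)"
proof -
  have "(\<lambda>x. npi c x * (norm (commutator i x))\<^sup>2) summable_on UNIV"
  proof (rule summable_on_comparison_test)
    show "(\<lambda>x. \<Sum>y\<in>\<Omega>. (u i y)\<^sup>2 * (c y x * (norm (\<alpha> y - \<alpha> x))\<^sup>2)) summable_on UNIV"
      using rows_summable by (intro summable_on_sum finite_\<Omega> summable_on_cmult_right) auto
  qed (use npi_commutator_norm_le npi_nonneg[OF network] in auto)
  then have "(\<Sum>x\<in>\<Omega>. npi c x * (norm (commutator i x))\<^sup>2)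
      \<le> (\<Sum>\<^sub>\<infinity>x. npi c x * (norm (commutator i x))\<^sup>2)"
    using finite_\<Omega> npi_nonneg[OF network] by (intro finite_sum_le_infsum) auto
  then show ?thesis
    unfolding nnormsq_def residual_eq_commutator[OF i] .
qed

lemma commutator_inner:
  "(\<Sum>x\<in>\<Omega>. npi c x * inner (commutator i x) (u i x *\<^sub>R \<alpha> x))
     = (\<Sum>x\<in>\<Omega>. \<Sum>y\<in>\<Omega>. u i x * u i y * (c x y * (norm (\<alpha> x - \<alpha> y))\<^sup>2)) / 2"
proof -
  define h where "h x y = c x y * u i x * u i y" for x y
  have h_sym: "h x y = h y x" for x y
    by (simp add: h_def network_sym[OF network, of x y] mult_ac)
  have "npi c x \<noteq> 0" if "x \<in> \<Omega>" for x
    using npi_pos[OF that] by simp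
  define S where "S = (\<Sum>x\<in>\<Omega>. \<Sum>y\<in>\<Omega>. h x y * inner (\<alpha> x - \<alpha> y) (\<alpha> x))"
  have "(\<Sum>x\<in>\<Omega>. npi c x * inner (commutator i x) (u i x *\<^sub>R \<alpha> x)) = S"
    unfolding S_def commutator_def inner_sum_left sum_distrib_left
    by (intro sum.cong refl) (simp add: h_def trans_prob_def \<open>\<And>x. x \<in> \<Omega> \<Longrightarrow> npi c x \<noteq> 0\<close> mult_ac)
  also have "S = (\<Sum>x\<in>\<Omega>. \<Sum>y\<in>\<Omega>. h x y * inner (\<alpha> y - \<alpha> x) (\<alpha> y))"
    unfolding S_def by (subst sum.swap) (simp add: h_sym)
  then have "2 * S = (\<Sum>x\<in>\<Omega>. \<Sum>y\<in>\<Omega>. h x y * (inner (\<alpha> x - \<alpha> y) (\<alpha> x) + inner (\<alpha> y - \<alpha> x) (\<alpha> y)))"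
    unfolding S_def by (simp add: sum.distrib distrib_left)
  also have "\<dots> = (\<Sum>x\<in>\<Omega>. \<Sum>y\<in>\<Omega>. h x y * (norm (\<alpha> x - \<alpha> y))\<^sup>2)"
    by (simp add: power2_norm_eq_inner inner_diff_left inner_diff_right inner_commute algebra_simps)
  finally show ?thesis
    by (simp add: h_def mult_ac)
qed

lemma Gamma_u2_minus_Lambda_coeff:
  assumes i: "i \<in> {1..n}"
  shows "Gamma_u2 c \<alpha> (u i) - Lambda c \<alpha> (u i) = (\<Sum>j=1..n. (lam j - lam i) * (norm (coeff i j))\<^sup>2)"
proof -
  have "Gamma_u2 c \<alpha> (u i) - Lambda c \<alpha> (u i)
      = (\<Sum>x\<in>\<Omega>. npi c x * inner (commutator i x) (u i x *\<^sub>R \<alpha> x))"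
    unfolding commutator_inner using network finite_\<Omega> u_vanish[OF i] rows_summable
    by (rule Gamma_u2_minus_Lambda)
  also have "\<dots> = (\<Sum>j=1..n. inner (\<Sum>x\<in>\<Omega>. (npi c x * u j x) *\<^sub>R commutator i x)
                               (\<Sum>y\<in>\<Omega>. (npi c y * u j y) *\<^sub>R (u i y *\<^sub>R \<alpha> y)))"
    by (rule parseval_complete_system[OF finite_\<Omega> completeness, symmetric])
  also have "\<dots> = (\<Sum>j=1..n. inner ((lam j - lam i) *\<^sub>R coeff i j) (coeff i j))"
  proof (intro sum.cong refl)
    fix j assume j: "j \<in> {1..n}"
    have "(\<Sum>y\<in>\<Omega>. (npi c y * u j y) *\<^sub>R (u i y *\<^sub>R \<alpha> y)) = coeff i j"
      by (simp add: coeff_def mult_ac)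
    then show "inner (\<Sum>x\<in>\<Omega>. (npi c x * u j x) *\<^sub>R commutator i x)
                     (\<Sum>y\<in>\<Omega>. (npi c y * u j y) *\<^sub>R (u i y *\<^sub>R \<alpha> y))
        = inner ((lam j - lam i) *\<^sub>R coeff i j) (coeff i j)"
      by (simp add: commutator_coeff[OF i j])
  qed
  also have "\<dots> = (\<Sum>j=1..n. (lam j - lam i) * (norm (coeff i j))\<^sup>2)"
    by (simp add: power2_norm_eq_inner)
  finally show ?thesis .
qed

end

theorem theorem3p2:
  fixes c :: "'v::countable \<Rightarrow> 'v \<Rightarrow> real"
    and \<Omega> :: "'v set" and n :: nat
    and lam :: "nat \<Rightarrow> real" and u :: "nat \<Rightarrow> 'v \<Rightarrow> real"
    and \<alpha> :: "'v \<Rightarrow> 'h::{real_inner, complete_space}"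
    and k :: nat
  assumes "network c"
    and "finite \<Omega>" and "card \<Omega> = n"
    and "dirichlet_system c \<Omega> n lam u"
    and "\<forall>x\<in>\<Omega>. (\<lambda>y. c x y * (norm (\<alpha> x - \<alpha> y))\<^sup>2) summable_on UNIV"
    and "k < n"
  shows "(\<Sum>i=1..k. (lam (Suc k) - lam i)\<^sup>2 * (Gamma_u2 c \<alpha> (u i) - Lambda c \<alpha> (u i)))
         \<le> (\<Sum>i=1..k. (lam (Suc k) - lam i) *
              nnormsq c (\<lambda>x. u i x *\<^sub>R lap c \<alpha> x - 2 *\<^sub>R Gamma2 c \<alpha> (u i) x))"
proof -
  interpret dirichlet_basis_field c \<Omega> n lam u \<alpha>
    using assms by unfold_locales auto
  define w where "w i j = (norm (coeff i j))\<^sup>2" for i j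
  have i_range: "i \<in> {1..n}" if "i \<in> {1..k}" for i
    using that \<open>k < n\<close> by simp
  have "(\<Sum>i=1..k. (lam (Suc k) - lam i)\<^sup>2 * (Gamma_u2 c \<alpha> (u i) - Lambda c \<alpha> (u i)))
      = (\<Sum>i=1..k. (lam (Suc k) - lam i)\<^sup>2 * (\<Sum>j=1..n. (lam j - lam i) * w i j))"
    by (intro sum.cong refl) (simp add: Gamma_u2_minus_Lambda_coeff[OF i_range] w_def)
  also have "\<dots> \<le> (\<Sum>i=1..k. (lam (Suc k) - lam i) * (\<Sum>j=1..n. (lam j - lam i)\<^sup>2 * w i j))"
    using \<open>k < n\<close> lam_mono by (intro gap_weighted_sum_le) (auto simp: w_def coeff_sym)
  also have "\<dots> \<le> (\<Sum>i=1..k. (lam (Suc k) - lam i) *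
              nnormsq c (\<lambda>x. u i x *\<^sub>R lap c \<alpha> x - 2 *\<^sub>R Gamma2 c \<alpha> (u i) x))"
  proof (intro sum_mono mult_left_mono)
    fix i assume i: "i \<in> {1..k}"
    show "(\<Sum>j=1..n. (lam j - lam i)\<^sup>2 * w i j)
        \<le> nnormsq c (\<lambda>x. u i x *\<^sub>R lap c \<alpha> x - 2 *\<^sub>R Gamma2 c \<alpha> (u i) x)"
      using commutator_energy_le_nnormsq[OF i_range[OF i]]
      unfolding commutator_energy[OF i_range[OF i]] w_def .
    show "0 \<le> lam (Suc k) - lam i"
      using lam_mono[of i "Suc k"] i \<open>k < n\<close> by simp
  qed
  finally show ?thesis .
qed

end
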